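(* Let $X$ be a complementably homogeneous Banach space. Then $\mathscr{S}_X(X)$ is the unique maximal two-sided ideal of $\mathscr{B}(X)$ if and only if $\mathscr{S}_X(X)$ is closed under addition.
   Context: An infinite-dimensional Banach space $X$ is complementably homogeneous if for every closed subspace $Y\subseteq X$ isomorphic to $X$ there is a complemented subspace $W\subseteq Y$ of $X$ isomorphic to $X$. $\mathscr{S}_X(X)$ is the set of $T\in\mathscr{B}(X)$ such that there is no closed subspace $W\subseteq X$ isomorphic to $X$ with $T|_W$ bounded below. *)

theory Defs
  imports "HOL-Analysis.Analysis"
begin

definition infinite_dimensional :: "'a::real_normed_vector itself \<Rightarrow> bool" where
  "infinite_dimensional _ \<longleftrightarrow> \<not> (\<exists>S::'a set. finite S \<and> span S = UNIV)"

definition bounded_below_on :: "('a::real_normed_vector \<Rightarrow>\<^sub>L 'b::real_normed_vector) \<Rightarrow> 'a set \<Rightarrow> bool" where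
  "bounded_below_on T W \<longleftrightarrow> (\<exists>c>0. \<forall>x\<in>W. c * norm x \<le> norm (T x))"

text \<open>A closed subspace Y of X is isomorphic to X iff there is a bounded operator on X
  that is bounded below (hence an isomorphism onto its range) with range Y.\<close>
definition iso_to_space :: "'a::banach set \<Rightarrow> bool" where
  "iso_to_space Y \<longleftrightarrow> (\<exists>T::'a \<Rightarrow>\<^sub>L 'a. range (blinfun_apply T) = Y \<and> bounded_below_on T UNIV)"

definition closed_subspace :: "'a::real_normed_vector set \<Rightarrow> bool" where
  "closed_subspace Y \<longleftrightarrow> subspace Y \<and> closed Y"

definition complemented :: "'a::banach set \<Rightarrow> bool" where
  "complemented W \<longleftrightarrow> closed_subspace W \<and>
     (\<exists>P::'a \<Rightarrow>\<^sub>L 'a. P o\<^sub>L P = P \<and> range (blinfun_apply P) = W)"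

definition complementably_homogeneous :: "'a::banach itself \<Rightarrow> bool" where
  "complementably_homogeneous TYPE('a) \<longleftrightarrow> infinite_dimensional TYPE('a) \<and>
     (\<forall>Y::'a set. closed_subspace Y \<and> iso_to_space Y \<longrightarrow>
        (\<exists>W. W \<subseteq> Y \<and> complemented W \<and> iso_to_space W))"

definition SX :: "('a::banach \<Rightarrow>\<^sub>L 'a) set" where
  "SX = {T. \<not> (\<exists>W. closed_subspace W \<and> iso_to_space W \<and> bounded_below_on T W)}"

definition two_sided_ideal :: "('a::banach \<Rightarrow>\<^sub>L 'a) set \<Rightarrow> bool" where
  "two_sided_ideal I \<longleftrightarrow> 0 \<in> I \<and> (\<forall>a\<in>I. \<forall>b\<in>I. a + b \<in> I) \<and> (\<forall>a\<in>I. - a \<in> I) \<and>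
     (\<forall>a\<in>I. \<forall>b. b o\<^sub>L a \<in> I \<and> a o\<^sub>L b \<in> I)"

definition maximal_ideal :: "('a::banach \<Rightarrow>\<^sub>L 'a) set \<Rightarrow> bool" where
  "maximal_ideal I \<longleftrightarrow> two_sided_ideal I \<and> I \<noteq> UNIV \<and>
     (\<forall>J. two_sided_ideal J \<and> J \<noteq> UNIV \<and> I \<subseteq> J \<longrightarrow> J = I)"

end

theory Submission
  imports Defs
begin

text \<open>An operator outside \<open>SX\<close> is bounded below on a copy of X; by complementable homogeneity
  its image contains a complemented copy Z of X. Inverting T on that copy and composing with the
  projection onto Z factors the identity through T, so any ideal containing T is all of B(X).
  Hence every proper ideal lies in \<open>SX\<close>. Being bounded below on a copy of X survives composition
  and negation, so \<open>SX\<close> is closed under everything an ideal needs except possibly addition;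
  once it is additive it is therefore the largest proper ideal, i.e. the unique maximal one.\<close>

lemma bounded_below_on_inj_on:
  fixes T :: "'a::real_normed_vector \<Rightarrow>\<^sub>L 'b::real_normed_vector"
  assumes "subspace V" "bounded_below_on T V"
  shows "inj_on (blinfun_apply T) V"
proof (rule inj_onI)
  fix u v assume uv: "u \<in> V" "v \<in> V" "T u = T v"
  obtain c where c: "c > 0" "\<forall>x\<in>V. c * norm x \<le> norm (T x)"
    using assms(2) unfolding bounded_below_on_def by auto
  have "u - v \<in> V" using assms(1) uv by (simp add: subspace_diff)
  then have "c * norm (u - v) \<le> norm (T (u - v))" using c by auto
  also have "T (u - v) = 0" using uv by (simp add: blinfun.diff_right)
  finally show "u = v" using c(1) by (simp add: mult_le_0_iff)
qed

lemma bounded_below_on_compose: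
  fixes S :: "'b::real_normed_vector \<Rightarrow>\<^sub>L 'c::real_normed_vector"
    and T :: "'a::real_normed_vector \<Rightarrow>\<^sub>L 'b"
  assumes "bounded_below_on S (blinfun_apply T ` W)" "bounded_below_on T W"
  shows "bounded_below_on (S o\<^sub>L T) W"
proof -
  obtain c where c: "c > 0" "\<forall>y\<in>blinfun_apply T ` W. c * norm y \<le> norm (S y)"
    using assms(1) unfolding bounded_below_on_def by auto
  obtain d where d: "d > 0" "\<forall>x\<in>W. d * norm x \<le> norm (T x)"
    using assms(2) unfolding bounded_below_on_def by auto
  have "c * d * norm x \<le> norm (S (T x))" if "x \<in> W" for x
  proof -
    have "c * (d * norm x) \<le> c * norm (T x)" using c(1) d(2) that by simp
    also have "\<dots> \<le> norm (S (T x))" using c(2) that by simp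
    finally show ?thesis by simp
  qed
  then show ?thesis using c(1) d(1) unfolding bounded_below_on_def
    by (intro exI[of _ "c * d"]) auto
qed

lemma bounded_below_on_compose_right:
  fixes S :: "'b::real_normed_vector \<Rightarrow>\<^sub>L 'c::real_normed_vector"
    and T :: "'a::real_normed_vector \<Rightarrow>\<^sub>L 'b"
  assumes "bounded_below_on (S o\<^sub>L T) W"
  shows "bounded_below_on T W"
proof -
  obtain c where c: "c > 0" "\<forall>x\<in>W. c * norm x \<le> norm (S (T x))"
    using assms unfolding bounded_below_on_def by auto
  have k: "0 < norm S + 1" by (simp add: add_nonneg_pos)
  have "c / (norm S + 1) * norm x \<le> norm (T x)" if "x \<in> W" for x
  proof -
    have "c * norm x \<le> norm S * norm (T x)"
      using c(2) that norm_blinfun[of S "T x"] by fastforce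
    also have "\<dots> \<le> (norm S + 1) * norm (T x)" by (simp add: mult_right_mono)
    finally show ?thesis using k by (simp add: field_simps)
  qed
  then show ?thesis using c(1) k unfolding bounded_below_on_def
    by (intro exI[of _ "c / (norm S + 1)"]) simp
qed

lemma bounded_below_on_compose_left:
  fixes S :: "'b::real_normed_vector \<Rightarrow>\<^sub>L 'c::real_normed_vector"
    and T :: "'a::real_normed_vector \<Rightarrow>\<^sub>L 'b"
  assumes "bounded_below_on (S o\<^sub>L T) W"
  shows "bounded_below_on S (blinfun_apply T ` W)"
proof -
  obtain c where c: "c > 0" "\<forall>x\<in>W. c * norm x \<le> norm (S (T x))"
    using assms unfolding bounded_below_on_def by auto
  have k: "0 < norm T + 1" by (simp add: add_nonneg_pos)
  have "c / (norm T + 1) * norm (T x) \<le> norm (S (T x))" if "x \<in> W" for x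
  proof -
    have "norm (T x) \<le> norm T * norm x" by (rule norm_blinfun)
    also have "\<dots> \<le> (norm T + 1) * norm x" by (simp add: mult_right_mono)
    finally have "c * norm (T x) \<le> c * ((norm T + 1) * norm x)"
      using c(1) by simp
    also have "\<dots> = (norm T + 1) * (c * norm x)" by simp
    also have "\<dots> \<le> (norm T + 1) * norm (S (T x))"
      using c(2) that k by simp
    finally show ?thesis using k by (simp add: field_simps)
  qed
  then show ?thesis using c(1) k unfolding bounded_below_on_def
    by (intro exI[of _ "c / (norm T + 1)"]) auto
qed

lemma bounded_below_on_uminus_iff: "bounded_below_on (- T) W \<longleftrightarrow> bounded_below_on T W"
  unfolding bounded_below_on_def by (simp add: blinfun.minus_left)

lemma bounded_below_on_zero_iff:
  "bounded_below_on (0 :: 'a::real_normed_vector \<Rightarrow>\<^sub>L 'b::real_normed_vector) W \<longleftrightarrow> W \<subseteq> {0}"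
  unfolding bounded_below_on_def by (auto simp: mult_le_0_iff intro!: exI[of _ 1])

lemma closed_subspace_range_bounded_below:
  fixes T :: "'a::banach \<Rightarrow>\<^sub>L 'b::banach"
  assumes "bounded_below_on T UNIV"
  shows "closed_subspace (range (blinfun_apply T))"
proof -
  obtain c where c: "c > 0" "\<forall>x. c * norm x \<le> norm (T x)"
    using assms unfolding bounded_below_on_def by auto
  have "complete (range (blinfun_apply T))"
    by (rule complete_isometric_image[OF c(1) subspace_UNIV blinfun.bounded_linear_right])
       (use c complete_UNIV in auto)
  then show ?thesis
    unfolding closed_subspace_def
    by (simp add: complete_imp_closed linear_subspace_image blinfun.bounded_linear_right
        bounded_linear.linear)
qed

lemma iso_to_space_closed_subspace: "iso_to_space (Y::'a::banach set) \<Longrightarrow> closed_subspace Y"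
  unfolding iso_to_space_def using closed_subspace_range_bounded_below by blast

lemma iso_to_space_image:
  fixes T :: "'a::banach \<Rightarrow>\<^sub>L 'a"
  assumes "iso_to_space W" "bounded_below_on T W"
  shows "iso_to_space (blinfun_apply T ` W)"
proof -
  obtain U :: "'a \<Rightarrow>\<^sub>L 'a" where U: "range (blinfun_apply U) = W" "bounded_below_on U UNIV"
    using assms(1) unfolding iso_to_space_def by blast
  have "range (blinfun_apply (T o\<^sub>L U)) = blinfun_apply T ` W"
    using U(1) by auto
  moreover have "bounded_below_on (T o\<^sub>L U) UNIV"
    using bounded_below_on_compose assms(2) U by metis
  ultimately show ?thesis unfolding iso_to_space_def by blast
qed

lemma iso_to_space_not_subset_zero:
  assumes "iso_to_space (W::'a::banach set)" "(x::'a) \<noteq> 0"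
  shows "\<not> W \<subseteq> {0}"
proof
  obtain U :: "'a \<Rightarrow>\<^sub>L 'a" where U: "range (blinfun_apply U) = W" "bounded_below_on U UNIV"
    using assms(1) unfolding iso_to_space_def by blast
  assume "W \<subseteq> {0}"
  then have "bounded_below_on (0 o\<^sub>L U) UNIV"
    using U by (intro bounded_below_on_compose) (simp_all add: bounded_below_on_zero_iff)
  moreover have "0 o\<^sub>L U = 0" by (rule blinfun_eqI) simp
  ultimately have "bounded_below_on 0 (UNIV::'a set)" by simp
  with assms(2) show False by (auto simp: bounded_below_on_zero_iff)
qed

lemma bounded_below_on_factorization:
  fixes T :: "'a::real_normed_vector \<Rightarrow>\<^sub>L 'b::real_normed_vector"
    and R :: "'c::real_normed_vector \<Rightarrow>\<^sub>L 'b"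
  assumes V: "subspace V" and bb: "bounded_below_on T V"
    and R: "range (blinfun_apply R) \<subseteq> blinfun_apply T ` V"
  shows "\<exists>B::'c \<Rightarrow>\<^sub>L 'a. \<forall>x. B x \<in> V \<and> T (B x) = R x"
proof -
  obtain c where c: "c > 0" "\<forall>x\<in>V. c * norm x \<le> norm (T x)"
    using bb unfolding bounded_below_on_def by auto
  have inj: "inj_on (blinfun_apply T) V" using V bb by (rule bounded_below_on_inj_on)
  define f where "f x = inv_into V (blinfun_apply T) (R x)" for x
  have f: "f x \<in> V \<and> T (f x) = R x" for x
  proof -
    have "R x \<in> blinfun_apply T ` V" using R by auto
    then show ?thesis unfolding f_def by (auto intro: inv_into_into f_inv_into_f)
  qed
  have "bounded_linear f"
  proof (rule bounded_linear_intro[where K = "norm R / c"])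
    show "f (x + y) = f x + f y" for x y
      using f V by (intro inj_onD[OF inj])
        (auto simp: blinfun.add_right intro: subspace_add)
    show "f (r *\<^sub>R x) = r *\<^sub>R f x" for r x
      using f V by (intro inj_onD[OF inj])
        (auto simp: blinfun.scaleR_right intro: subspace_scale)
    fix x
    have "c * norm (f x) \<le> norm (R x)" using c f[of x] by auto
    also have "\<dots> \<le> norm R * norm x" by (rule norm_blinfun)
    finally show "norm (f x) \<le> norm x * (norm R / c)"
      using c by (simp add: field_simps)
  qed
  then show ?thesis using f by (intro exI[of _ "Blinfun f"]) (simp add: bounded_linear_Blinfun_apply)
qed

lemma identity_factors_through_not_SX:
  assumes ch: "complementably_homogeneous TYPE('a::banach)"
    and "(T :: 'a \<Rightarrow>\<^sub>L 'a) \<notin> SX"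
  shows "\<exists>A B :: 'a \<Rightarrow>\<^sub>L 'a. A o\<^sub>L T o\<^sub>L B = id_blinfun"
proof -
  obtain W where W: "closed_subspace W" "iso_to_space W" "bounded_below_on T W"
    using assms(2) unfolding SX_def by auto
  have "iso_to_space (blinfun_apply T ` W)" using W(2,3) by (rule iso_to_space_image)
  then obtain Z where Z: "Z \<subseteq> blinfun_apply T ` W" "complemented Z" "iso_to_space Z"
    using ch iso_to_space_closed_subspace unfolding complementably_homogeneous_def by blast
  obtain P :: "'a \<Rightarrow>\<^sub>L 'a" where P: "P o\<^sub>L P = P" "range (blinfun_apply P) = Z"
    using Z(2) unfolding complemented_def by auto
  obtain S :: "'a \<Rightarrow>\<^sub>L 'a" where S: "range (blinfun_apply S) = Z" "bounded_below_on S UNIV"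
    using Z(3) unfolding iso_to_space_def by blast
  obtain B :: "'a \<Rightarrow>\<^sub>L 'a" where B: "\<forall>x. B x \<in> W \<and> T (B x) = S x"
    using bounded_below_on_factorization[of W T S] W(1,3) S(1) Z(1)
    unfolding closed_subspace_def by auto
  obtain A :: "'a \<Rightarrow>\<^sub>L 'a" where A: "\<forall>x. S (A x) = P x"
    using bounded_below_on_factorization[of UNIV S P] S P(2) by auto
  have "A (S x) = x" for x
  proof (rule inj_onD[OF bounded_below_on_inj_on[OF subspace_UNIV S(2)]])
    have "P (S x) = S x"
      using P S(1) by (metis blinfun_apply_blinfun_compose rangeE rangeI)
    then show "S (A (S x)) = S x" using A by simp
  qed auto
  then have "A o\<^sub>L T o\<^sub>L B = id_blinfun" using B by (intro blinfun_eqI) simp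
  then show ?thesis by (intro exI)
qed

lemma proper_ideal_subset_SX:
  assumes "complementably_homogeneous TYPE('a::banach)"
    and J: "two_sided_ideal (J :: ('a \<Rightarrow>\<^sub>L 'a) set)" "J \<noteq> UNIV"
  shows "J \<subseteq> SX"
proof
  fix T assume "T \<in> J"
  show "T \<in> SX"
  proof (rule ccontr)
    assume "T \<notin> SX"
    then obtain A B :: "'a \<Rightarrow>\<^sub>L 'a" where AB: "A o\<^sub>L T o\<^sub>L B = id_blinfun"
      using identity_factors_through_not_SX assms(1) by blast
    have "A o\<^sub>L T o\<^sub>L B \<in> J" using J(1) \<open>T \<in> J\<close> unfolding two_sided_ideal_def by blast
    then have "C o\<^sub>L id_blinfun \<in> J" for C
      using J(1) unfolding AB two_sided_ideal_def by blast
    moreover have "C o\<^sub>L id_blinfun = C" for C :: "'a \<Rightarrow>\<^sub>L 'a" by (rule blinfun_eqI) simp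
    ultimately have "J = UNIV" by auto
    with J(2) show False ..
  qed
qed

lemma zero_in_SX:
  assumes "infinite_dimensional TYPE('a::banach)"
  shows "(0 :: 'a \<Rightarrow>\<^sub>L 'a) \<in> SX"
proof -
  have "span ({}::'a set) \<noteq> UNIV" using assms unfolding infinite_dimensional_def by blast
  then obtain x :: 'a where "x \<noteq> 0" by auto
  then show ?thesis
    unfolding SX_def using iso_to_space_not_subset_zero bounded_below_on_zero_iff by blast
qed

lemma uminus_in_SX_iff: "- T \<in> SX \<longleftrightarrow> T \<in> SX"
  unfolding SX_def by (simp add: bounded_below_on_uminus_iff)

lemma compose_left_in_SX: "T \<in> SX \<Longrightarrow> S o\<^sub>L T \<in> SX"
  unfolding SX_def using bounded_below_on_compose_right by blast

lemma compose_right_in_SX: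
  assumes "S \<in> SX"
  shows "S o\<^sub>L T \<in> SX"
  unfolding SX_def
proof clarify
  fix W :: "'a set"
  assume W: "closed_subspace W" "iso_to_space W" "bounded_below_on (S o\<^sub>L T) W"
  have "iso_to_space (blinfun_apply T ` W)"
    using W(2,3) bounded_below_on_compose_right iso_to_space_image by blast
  moreover have "bounded_below_on S (blinfun_apply T ` W)"
    using W(3) by (rule bounded_below_on_compose_left)
  ultimately show False
    using assms iso_to_space_closed_subspace unfolding SX_def by blast
qed

lemma id_not_in_SX: "id_blinfun \<notin> SX"
proof -
  have bb: "bounded_below_on (id_blinfun::'a::banach \<Rightarrow>\<^sub>L 'a) UNIV"
    unfolding bounded_below_on_def by (intro exI[of _ 1]) auto
  then have "iso_to_space (UNIV::'a set)"
    unfolding iso_to_space_def by (intro exI[of _ id_blinfun]) auto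
  with bb show ?thesis
    unfolding SX_def closed_subspace_def by (auto simp: subspace_UNIV)
qed

lemma two_sided_ideal_SX_iff:
  assumes "complementably_homogeneous TYPE('a::banach)"
  shows "two_sided_ideal (SX :: ('a \<Rightarrow>\<^sub>L 'a) set) \<longleftrightarrow>
    (\<forall>S\<in>(SX :: ('a \<Rightarrow>\<^sub>L 'a) set). \<forall>T\<in>SX. S + T \<in> SX)"
proof -
  have "(0 :: 'a \<Rightarrow>\<^sub>L 'a) \<in> SX"
    using assms zero_in_SX unfolding complementably_homogeneous_def by blast
  then show ?thesis
    unfolding two_sided_ideal_def by (simp add: uminus_in_SX_iff compose_left_in_SX compose_right_in_SX)
qed

lemma unique_maximal_ideal_iff_two_sided_ideal:
  assumes proper: "I \<noteq> UNIV"
    and greatest: "\<And>J. two_sided_ideal J \<Longrightarrow> J \<noteq> UNIV \<Longrightarrow> J \<subseteq> I"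
  shows "(maximal_ideal I \<and> (\<forall>J. maximal_ideal J \<longrightarrow> J = I)) \<longleftrightarrow> two_sided_ideal I"
proof
  assume I: "two_sided_ideal I"
  then have "maximal_ideal I" unfolding maximal_ideal_def using proper greatest by auto
  moreover have "J = I" if "maximal_ideal J" for J
    using that I proper greatest[of J] unfolding maximal_ideal_def by auto
  ultimately show "maximal_ideal I \<and> (\<forall>J. maximal_ideal J \<longrightarrow> J = I)" by blast
qed (simp add: maximal_ideal_def)

theorem mainTheorem4:
  assumes "complementably_homogeneous TYPE('a::banach)"
  shows "(maximal_ideal (SX :: ('a \<Rightarrow>\<^sub>L 'a) set) \<and>
           (\<forall>J::('a \<Rightarrow>\<^sub>L 'a) set. maximal_ideal J \<longrightarrow> J = SX))
         \<longleftrightarrow> (\<forall>S\<in>(SX :: ('a \<Rightarrow>\<^sub>L 'a) set). \<forall>T\<in>SX. S + T \<in> SX)"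
proof -
  have "(SX :: ('a \<Rightarrow>\<^sub>L 'a) set) \<noteq> UNIV" using id_not_in_SX by auto
  then have "(maximal_ideal (SX :: ('a \<Rightarrow>\<^sub>L 'a) set) \<and>
      (\<forall>J::('a \<Rightarrow>\<^sub>L 'a) set. maximal_ideal J \<longrightarrow> J = SX)) \<longleftrightarrow> two_sided_ideal (SX :: ('a \<Rightarrow>\<^sub>L 'a) set)"
    using proper_ideal_subset_SX[OF assms] by (rule unique_maximal_ideal_iff_two_sided_ideal)
  also have "\<dots> \<longleftrightarrow> (\<forall>S\<in>(SX :: ('a \<Rightarrow>\<^sub>L 'a) set). \<forall>T\<in>SX. S + T \<in> SX)"
    by (rule two_sided_ideal_SX_iff[OF assms])
  finally show ?thesis .
qed

end
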